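(* For every integer $h\ge0$, let $\mathrm{Horiz}_h(z)=\sum_{n\ge0}a_{n,h}z^n$, where $a_{n,h}$ is the number of Motzkin paths of length $n$ of height exactly $h$ that have at least one horizontal step on level $h$, and let $\mathrm{NoHoriz}_h(z)=\sum_{n\ge0}b_{n,h}z^n$, where $b_{n,h}$ is the number of Motzkin paths of length $n$ of height exactly $h$ that have no horizontal step on level $h$. Then $$\mathrm{Horiz}_h(z)=(1+v+v^2)(1-v^{-2})\Big[\frac{v^{2h+4}}{1-v^{2h+4}}-\frac{v^{2h+3}}{1-v^{2h+3}}\Big],$$ $$\mathrm{NoHoriz}_h(z)=(1+v+v^2)(1-v^{-2})\Big[\frac{v^{2h+3}}{1-v^{2h+3}}-\frac{v^{2h+2}}{1-v^{2h+2}}\Big].$$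
   Context: A Motzkin path of length $n$ is a sequence of $n$ steps, each an up-step $(1,1)$, a down-step $(1,-1)$ or a horizontal step $(1,0)$, starting at $(0,0)$, ending at $(n,0)$, and never going below the $x$-axis. Its height is the maximal $y$-coordinate reached. A horizontal step on level $j$ is a horizontal step from $(x,j)$ to $(x+1,j)$. Throughout, $v=v(z)=\frac{1-z-\sqrt{1-2z-3z^2}}{2z}=z+z^2+\cdots$ denotes the formal power series with $v(0)=0$ satisfying $z=\frac{v}{1+v+v^2}$; the expressions above are formal Laurent series in $v$ which are in fact power series in $v$, hence in $z$. *)

theory Defs
  imports "HOL-Computational_Algebra.Formal_Power_Series"
          "HOL-Computational_Algebra.Formal_Laurent_Series"
begin

datatype step = Up | Down | Hor

fun step_dy :: "step \<Rightarrow> int" where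
  "step_dy Up = 1" | "step_dy Down = -1" | "step_dy Hor = 0"

definition pos :: "step list \<Rightarrow> nat \<Rightarrow> int" where
  "pos p k = sum_list (map step_dy (take k p))"

definition motzkin_path :: "nat \<Rightarrow> step list \<Rightarrow> bool" where
  "motzkin_path n p \<longleftrightarrow> length p = n \<and> (\<forall>k\<le>n. 0 \<le> pos p k) \<and> pos p n = 0"

definition path_height :: "step list \<Rightarrow> int" where
  "path_height p = Max ((pos p) ` {0..length p})"

definition has_hor_on_level :: "step list \<Rightarrow> int \<Rightarrow> bool" where
  "has_hor_on_level p j \<longleftrightarrow> (\<exists>k<length p. p ! k = Hor \<and> pos p k = j)"

definition horiz_count :: "nat \<Rightarrow> nat \<Rightarrow> nat" where
  "horiz_count n h = card {p. motzkin_path n p \<and> path_height p = int h \<and> has_hor_on_level p (int h)}"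

definition nohoriz_count :: "nat \<Rightarrow> nat \<Rightarrow> nat" where
  "nohoriz_count n h = card {p. motzkin_path n p \<and> path_height p = int h \<and> \<not> has_hor_on_level p (int h)}"

definition Horiz :: "nat \<Rightarrow> real fps" where
  "Horiz h = Abs_fps (\<lambda>n. real (horiz_count n h))"

definition NoHoriz :: "nat \<Rightarrow> real fps" where
  "NoHoriz h = Abs_fps (\<lambda>n. real (nohoriz_count n h))"

text \<open>v = v(z): the unique power series with v(0) = 0 and z = v/(1+v+v^2),
  i.e. v = z (1 + v + v^2).\<close>
definition motzkin_v :: "real fps" where
  "motzkin_v = (THE v. fps_nth v 0 = 0 \<and> v = fps_X * (1 + v + v^2))"

end

theory Submission
  imports Defs
begin

text \<open>Say that a Motzkin path fits in strip \<open>m\<close> if \<open>2y < m\<close> for every level \<open>y\<close> it visits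
  and \<open>2j + 1 < m\<close> for every level \<open>j\<close> carrying a horizontal step. Strip \<open>2h + 2\<close> admits exactly
  the paths of height at most \<open>h\<close>, strip \<open>2h + 1\<close> those which moreover have no horizontal step
  on level \<open>h\<close>. Writing \<open>F m\<close> for the generating function of strip \<open>m\<close>, this gives
  \<open>Horiz h = F (2h + 2) - F (2h + 1)\<close> and \<open>NoHoriz h = F (2h + 1) - F (2h)\<close>.
  The walks from level \<open>y\<close> down to \<open>0\<close> inside strip \<open>m\<close> are counted by the unique solution of a
  linear transfer system, and since \<open>z (1 + v + v^2) = v\<close> this solution is
  \<open>(1 + v + v^2) (v^y - v^(m-y)) / (1 - v^(m+2))\<close>: by the reflection principle the mirrored term
  \<open>v^(m-y)\<close> cancels the forbidden steps at the upper boundary. Hence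
  \<open>F m = (1 + v + v^2) (1 - v^m) / (1 - v^(m+2))\<close>, and \<open>F (m + 1) - F m\<close> rearranges into the
  stated form.\<close>

lemma motzkin_equation_unique:
  fixes a b :: "'a::idom fps"
  assumes "a $ 0 = 0" "a = fps_X * (1 + a + a^2)" "b $ 0 = 0" "b = fps_X * (1 + b + b^2)"
  shows "a = b"
proof (rule ccontr)
  assume "a \<noteq> b"
  have unit: "1 + a + b \<noteq> 0"
    using assms(1,3) by (metis add.right_neutral fps_add_nth fps_one_nth fps_zero_nth zero_neq_one)
  have "a - b = fps_X * (1 + a + a^2) - fps_X * (1 + b + b^2)"
    using assms(2,4) by simp
  also have "\<dots> = fps_X * ((a - b) * (1 + a + b))"
    by (simp add: algebra_simps power2_eq_square)
  finally have "a - b = fps_X * ((a - b) * (1 + a + b))" .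
  then have "subdegree (a - b) = subdegree (fps_X * ((a - b) * (1 + a + b)))"
    by (rule arg_cong)
  also have "\<dots> = 1 + subdegree (a - b) + subdegree (1 + a + b)"
    using \<open>a \<noteq> b\<close> unit by simp
  finally show False by simp
qed

lemma motzkin_equation_solvable:
  "\<exists>v::'a::field fps. v $ 0 = 0 \<and> v = fps_X * (1 + v + v^2)"
proof -
  define v where "v = fps_inv (fps_X * inverse (1 + fps_X + fps_X^2) :: 'a fps)"
  have v0: "v $ 0 = 0" by (simp add: v_def fps_inv_def)
  have unit: "(1 + v + v^2) $ 0 \<noteq> 0" using v0 by (simp add: power2_eq_square)
  have "fps_X * inverse (1 + fps_X + fps_X^2) oo v = fps_X"
    unfolding v_def by (rule fps_inv_right) simp_all
  then have "v * inverse (1 + v + v^2) = fps_X"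
    using v0 by (simp add: fps_compose_mult_distrib fps_inverse_compose
         fps_compose_add_distrib fps_compose_power[symmetric])
  then have "v = fps_X * (1 + v + v^2)"
    using unit by (metis fps_divide_unit mult.commute fps_unit_dvd dvd_div_mult_self)
  with v0 show ?thesis by blast
qed

lemma
  shows motzkin_v_nth_0: "motzkin_v $ 0 = 0"
    and motzkin_v_eq: "motzkin_v = fps_X * (1 + motzkin_v + motzkin_v^2)"
proof -
  have "motzkin_v $ 0 = 0 \<and> motzkin_v = fps_X * (1 + motzkin_v + motzkin_v^2)"
    unfolding motzkin_v_def
    by (rule theI') (use motzkin_equation_solvable motzkin_equation_unique in blast)
  then show "motzkin_v $ 0 = 0" "motzkin_v = fps_X * (1 + motzkin_v + motzkin_v^2)" by auto
qed

lemma pos_0 [simp]: "pos p 0 = 0"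
  by (simp add: pos_def)

lemma pos_Cons_Suc [simp]: "pos (s # p) (Suc k) = step_dy s + pos p k"
  by (simp add: pos_def)

lemma double_path_height_less_iff:
  "2 * path_height p < c \<longleftrightarrow> (\<forall>k\<le>length p. 2 * pos p k < c)"
proof -
  have "path_height p \<in> pos p ` {0..length p}" "\<forall>k\<le>length p. pos p k \<le> path_height p"
    unfolding path_height_def by (auto intro: Max_in)
  then show ?thesis by force
qed

lemma path_height_nonneg: "0 \<le> path_height p"
  unfolding path_height_def by (subst Max_ge_iff) (auto intro: bexI[of _ 0])

lemma has_hor_on_level_le_height: "has_hor_on_level p j \<Longrightarrow> j \<le> path_height p"
  unfolding has_hor_on_level_def path_height_def by (subst Max_ge_iff) auto

lemma finite_step_lists: "finite {p :: step list. length p = n \<and> P p}"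
proof -
  have "(UNIV :: step set) \<subseteq> {Up, Down, Hor}" using step.exhaust by blast
  then have "finite (UNIV :: step set)" by (rule finite_subset) simp
  then have "finite {p :: step list. set p \<subseteq> UNIV \<and> length p = n}"
    by (rule finite_lists_length_eq)
  then show ?thesis by (rule rev_finite_subset) auto
qed

definition in_strip :: "nat \<Rightarrow> step list \<Rightarrow> bool" where
  "in_strip m p \<longleftrightarrow> 2 * path_height p < int m \<and> (\<forall>j. has_hor_on_level p j \<longrightarrow> 2 * j + 1 < int m)"

lemma in_strip_Suc: "in_strip m p \<Longrightarrow> in_strip (Suc m) p"
  by (auto simp: in_strip_def)

lemma in_strip_even: "in_strip (2 * h) p \<longleftrightarrow> path_height p < int h"
  unfolding in_strip_def by (auto dest: has_hor_on_level_le_height)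

lemma in_strip_odd:
  "in_strip (2 * h + 1) p \<longleftrightarrow> path_height p \<le> int h \<and> \<not> has_hor_on_level p (int h)"
  unfolding in_strip_def by (auto dest: has_hor_on_level_le_height)
    (metis has_hor_on_level_le_height order.strict_iff_order order.trans)

definition strip_series :: "nat \<Rightarrow> real fps" where
  "strip_series m = Abs_fps (\<lambda>n. real (card {p. motzkin_path n p \<and> in_strip m p}))"

lemma strip_series_Suc_minus:
  "strip_series (Suc m) - strip_series m =
     Abs_fps (\<lambda>n. real (card {p. motzkin_path n p \<and> in_strip (Suc m) p \<and> \<not> in_strip m p}))"
proof (rule fps_ext)
  fix n
  let ?S = "\<lambda>m. {p. motzkin_path n p \<and> in_strip m p}"
  have fin: "finite (?S (Suc m))"
    using finite_step_lists[of n] by (rule rev_finite_subset) (auto simp: motzkin_path_def)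
  have "{p. motzkin_path n p \<and> in_strip (Suc m) p \<and> \<not> in_strip m p} = ?S (Suc m) - ?S m"
    by auto
  moreover have "?S m \<subseteq> ?S (Suc m)" using in_strip_Suc by blast
  ultimately show "(strip_series (Suc m) - strip_series m) $ n =
     Abs_fps (\<lambda>n. real (card {p. motzkin_path n p \<and> in_strip (Suc m) p \<and> \<not> in_strip m p})) $ n"
    using fin by (simp add: strip_series_def card_Diff_subset card_mono finite_subset of_nat_diff)
qed

lemma Horiz_eq_strip_series: "Horiz h = strip_series (2 * h + 2) - strip_series (2 * h + 1)"
proof -
  have "path_height p = int h \<and> has_hor_on_level p (int h) \<longleftrightarrow>
        in_strip (2 * (h + 1)) p \<and> \<not> in_strip (2 * h + 1) p" for p
    unfolding in_strip_odd in_strip_even by (auto dest: has_hor_on_level_le_height)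
  then show ?thesis
    using strip_series_Suc_minus[of "2 * h + 1"]
    by (simp add: Horiz_def horiz_count_def conj_assoc)
qed

lemma NoHoriz_eq_strip_series: "NoHoriz h = strip_series (2 * h + 1) - strip_series (2 * h)"
proof -
  have "path_height p = int h \<and> \<not> has_hor_on_level p (int h) \<longleftrightarrow>
        in_strip (2 * h + 1) p \<and> \<not> in_strip (2 * h) p" for p
    unfolding in_strip_odd in_strip_even by auto
  then show ?thesis
    using strip_series_Suc_minus[of "2 * h"]
    by (simp add: NoHoriz_def nohoriz_count_def conj_assoc)
qed

fun strip_walk :: "nat \<Rightarrow> nat \<Rightarrow> step list \<Rightarrow> bool" where
  "strip_walk m y [] \<longleftrightarrow> y = 0"
| "strip_walk m y (Up # p) \<longleftrightarrow> 2 * y + 2 < m \<and> strip_walk m (Suc y) p"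
| "strip_walk m y (Down # p) \<longleftrightarrow> 0 < y \<and> strip_walk m (y - 1) p"
| "strip_walk m y (Hor # p) \<longleftrightarrow> 2 * y + 1 < m \<and> strip_walk m y p"

lemma strip_walk_iff:
  assumes "2 * y < m"
  shows "strip_walk m y p \<longleftrightarrow>
    (\<forall>k\<le>length p. 0 \<le> int y + pos p k \<and> 2 * (int y + pos p k) < int m)
    \<and> int y + pos p (length p) = 0
    \<and> (\<forall>k<length p. p ! k = Hor \<longrightarrow> 2 * (int y + pos p k) + 1 < int m)"
  using assms
proof (induction p arbitrary: y)
  case Nil
  then show ?case by auto
next
  case (Cons s p)
  have all_Suc: "(\<forall>k\<le>Suc n. P k) \<longleftrightarrow> P 0 \<and> (\<forall>k\<le>n. P (Suc k))" for P and n :: nat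
    by (metis Suc_le_mono le0 not0_implies_Suc)
  show ?case
  proof (cases s)
    case Up
    show ?thesis
    proof (cases "2 * y + 2 < m")
      case True
      then show ?thesis using Cons.IH[of "Suc y"] Up by (simp add: all_Suc All_less_Suc2 algebra_simps)
    qed (use Up in \<open>auto simp: all_Suc\<close>)
  next
    case Down
    show ?thesis
    proof (cases "0 < y")
      case True
      then show ?thesis using Cons.IH[of "y - 1"] Cons.prems Down
        by (simp add: all_Suc All_less_Suc2 of_nat_diff algebra_simps)
    qed (use Down in \<open>auto simp: all_Suc\<close>)
  next
    case Hor
    then show ?thesis using Cons.IH[of y] Cons.prems by (auto simp: all_Suc All_less_Suc2 algebra_simps)
  qed
qed

lemma motzkin_in_strip_iff_strip_walk:
  assumes "0 < m"
  shows "motzkin_path n p \<and> in_strip m p \<longleftrightarrow> length p = n \<and> strip_walk m 0 p"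
  using assms
  by (subst strip_walk_iff)
     (auto simp: motzkin_path_def in_strip_def double_path_height_less_iff has_hor_on_level_def)

definition strip_count :: "nat \<Rightarrow> nat \<Rightarrow> nat \<Rightarrow> nat" where
  "strip_count m y n = card {p. length p = n \<and> strip_walk m y p}"

definition step_sum :: "nat \<Rightarrow> (nat \<Rightarrow> 'a::comm_monoid_add) \<Rightarrow> nat \<Rightarrow> 'a" where
  "step_sum m f y = (if 2 * y + 2 < m then f (Suc y) else 0) + (if 0 < y then f (y - 1) else 0)
                    + (if 2 * y + 1 < m then f y else 0)"

lemma strip_count_0: "strip_count m y 0 = (if y = 0 then 1 else 0)"
proof -
  have "{p. length p = 0 \<and> strip_walk m y p} = (if y = 0 then {[]} else {})" by auto
  then show ?thesis by (simp add: strip_count_def)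
qed

lemma strip_count_Suc: "strip_count m y (Suc n) = step_sum m (\<lambda>z. strip_count m z n) y"
proof -
  define W where "W z = {p. length p = n \<and> strip_walk m z p}" for z
  define U where "U = (if 2 * y + 2 < m then W (Suc y) else {})"
  define D where "D = (if 0 < y then W (y - 1) else {})"
  define H where "H = (if 2 * y + 1 < m then W y else {})"
  have fin: "finite U" "finite D" "finite H"
    by (simp_all add: U_def D_def H_def W_def finite_step_lists)
  have first_step: "{p. length p = Suc n \<and> strip_walk m y p} = (Cons Up ` U \<union> Cons Down ` D) \<union> Cons Hor ` H"
  proof (intro set_eqI iffI)
    fix p assume "p \<in> {p. length p = Suc n \<and> strip_walk m y p}"
    then obtain s q where "p = s # q" "length q = n" "strip_walk m y (s # q)"
      by (cases p) auto
    then show "p \<in> (Cons Up ` U \<union> Cons Down ` D) \<union> Cons Hor ` H"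
      by (cases s) (auto simp: U_def D_def H_def W_def)
  qed (auto simp: U_def D_def H_def W_def split: if_splits)
  have "strip_count m y (Suc n) = card (Cons Up ` U \<union> Cons Down ` D) + card (Cons Hor ` H)"
    unfolding strip_count_def first_step using fin by (intro card_Un_disjoint) auto
  also have "card (Cons Up ` U \<union> Cons Down ` D) = card U + card D"
    using fin by (subst card_Un_disjoint) (auto simp: card_image)
  also have "card (Cons Hor ` H) = card H"
    by (simp add: card_image)
  finally show ?thesis
    by (simp add: step_sum_def U_def D_def H_def W_def strip_count_def)
qed

lemma step_sum_cong:
  assumes "2 * y < m" "\<And>z. 2 * z < m \<Longrightarrow> f z = g z"
  shows "step_sum m f y = step_sum m g y"
  using assms by (simp add: step_sum_def)

lemma step_sum_mult: "step_sum m (\<lambda>z. c * f z) y = (c :: 'a::semiring_0) * step_sum m f y"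
  by (simp add: step_sum_def distrib_left)

lemma step_sum_nth: "step_sum m f y $ n = step_sum m (\<lambda>z. f z $ n) y"
  by (simp add: step_sum_def)

lemma of_nat_step_sum: "of_nat (step_sum m f y) = step_sum m (\<lambda>z. of_nat (f z)) y"
  by (simp add: step_sum_def)

lemma strip_transfer_solution_nth:
  fixes f :: "nat \<Rightarrow> 'a::comm_ring_1 fps"
  assumes transfer: "\<And>z. 2 * z < m \<Longrightarrow> f z = (if z = 0 then 1 else 0) + fps_X * step_sum m f z"
    and "2 * y < m"
  shows "f y $ n = of_nat (strip_count m y n)"
  using assms(2)
proof (induction n arbitrary: y)
  case 0
  then show ?case by (subst transfer) (simp_all add: strip_count_0)
next
  case (Suc n)
  have "f y $ Suc n = step_sum m (\<lambda>z. f z $ n) y"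
    using Suc.prems by (subst transfer) (simp_all add: step_sum_nth)
  also have "\<dots> = step_sum m (\<lambda>z. of_nat (strip_count m z n)) y"
    using Suc by (intro step_sum_cong)
  finally show ?case by (simp add: strip_count_Suc of_nat_step_sum)
qed

definition strip_weight :: "'a::comm_ring_1 \<Rightarrow> nat \<Rightarrow> nat \<Rightarrow> 'a" where
  "strip_weight x m y = x ^ y - x ^ (m - y)"

lemma step_sum_strip_weight:
  fixes x :: "'a::comm_ring_1"
  assumes "2 * y < m"
  shows "step_sum m (strip_weight x m) y =
    (if 0 < y then strip_weight x m (y - 1) else 0) + strip_weight x m (Suc y) + strip_weight x m y"
proof -
  consider "2 * y + 2 < m" | "m = 2 * y + 2" | "m = 2 * y + 1" using assms by linarith
  then show ?thesis
    by cases (auto simp: step_sum_def strip_weight_def)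
qed

lemma strip_weight_transfer:
  fixes x :: "'a::comm_ring_1"
  assumes "2 * y < m"
  shows "(1 + x + x^2) * strip_weight x m y =
    (if y = 0 then 1 - x ^ (m + 2) else 0) + x * step_sum m (strip_weight x m) y"
proof -
  obtain k where "m = y + Suc k"
    using assms less_imp_Suc_add[of y m] by auto
  then show ?thesis
    using assms
    by (cases y) (simp_all add: step_sum_strip_weight strip_weight_def algebra_simps power2_eq_square)
qed

lemma one_minus_motzkin_v_power_nth_0: "0 < k \<Longrightarrow> (1 - motzkin_v ^ k) $ 0 = 1"
  using motzkin_v_nth_0 by (simp add: fps_nth_power_0)

definition strip_gf :: "nat \<Rightarrow> nat \<Rightarrow> real fps" where
  "strip_gf m y = (1 + motzkin_v + motzkin_v^2) * inverse (1 - motzkin_v ^ (m + 2))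
                  * strip_weight motzkin_v m y"

lemma strip_gf_transfer:
  assumes "2 * y < m"
  shows "strip_gf m y = (if y = 0 then 1 else 0) + fps_X * step_sum m (strip_gf m) y"
proof -
  define Q where "Q = 1 + motzkin_v + motzkin_v^2"
  define R where "R = 1 - motzkin_v ^ (m + 2)"
  define S where "S = step_sum m (strip_weight motzkin_v m) y"
  have "R $ 0 = 1"
    unfolding R_def by (rule one_minus_motzkin_v_power_nth_0) simp
  then have R: "inverse R * R = 1"
    by (intro inverse_mult_eq_1) simp
  have "strip_gf m y = inverse R * (Q * strip_weight motzkin_v m y)"
    by (simp add: strip_gf_def Q_def R_def mult_ac)
  also have "\<dots> = inverse R * ((if y = 0 then R else 0) + fps_X * Q * S)"
    using strip_weight_transfer[OF assms, of motzkin_v] motzkin_v_eq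
    by (simp add: Q_def R_def S_def mult.assoc)
  also have "\<dots> = (if y = 0 then 1 else 0) + fps_X * (Q * inverse R * S)"
    using R by (simp add: algebra_simps)
  also have "Q * inverse R * S = step_sum m (strip_gf m) y"
    unfolding S_def strip_gf_def[abs_def] Q_def R_def by (rule step_sum_mult[symmetric])
  finally show ?thesis .
qed

lemma strip_series_eq_strip_gf:
  assumes "0 < m"
  shows "strip_series m = strip_gf m 0"
proof (rule fps_ext)
  fix n
  have "{p. motzkin_path n p \<and> in_strip m p} = {p. length p = n \<and> strip_walk m 0 p}"
    using motzkin_in_strip_iff_strip_walk[OF assms] by blast
  then show "strip_series m $ n = strip_gf m 0 $ n"
    using strip_transfer_solution_nth[of m "strip_gf m" 0] strip_gf_transfer assms
    by (simp add: strip_series_def strip_count_def)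
qed

lemma fls_strip_series:
  fixes m :: nat
  defines "w \<equiv> fps_to_fls motzkin_v"
  shows "fps_to_fls (strip_series m) = (1 + w + w^2) * (1 - w ^ m) / (1 - w ^ (m + 2))"
proof (cases "m = 0")
  case True
  have "\<not> in_strip 0 p" for p
    using in_strip_even[of 0 p] path_height_nonneg[of p] by simp
  then have "strip_series m = 0"
    using True by (simp add: strip_series_def fps_zero_def)
  with True show ?thesis by simp
next
  case False
  have "(1 - motzkin_v ^ (m + 2)) $ 0 = 1"
    by (rule one_minus_motzkin_v_power_nth_0) simp
  then have "subdegree (1 - motzkin_v ^ (m + 2)) = 0"
    by (metis subdegree_eq_0 one_neq_zero)
  then have "inverse (fps_to_fls (1 - motzkin_v ^ (m + 2))) = fps_to_fls (inverse (1 - motzkin_v ^ (m + 2)))"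
    by (rule fls_inverse_fps_to_fls)
  then have "fps_to_fls (inverse (1 - motzkin_v ^ (m + 2))) = inverse (1 - w ^ (m + 2))"
    unfolding w_def fps_to_fls_minus fps_one_to_fls fps_to_fls_power by (rule sym)
  with False show ?thesis
    by (simp add: strip_series_eq_strip_gf strip_gf_def strip_weight_def fls_times_fps_to_fls
        fps_to_fls_power w_def divide_inverse mult_ac)
qed

lemma one_minus_inverse_square_ratio:
  fixes w :: "'a::field"
  assumes "w \<noteq> 0" "1 - w ^ (j + 2) \<noteq> 0"
  shows "(1 - 1 / w^2) * (w ^ (j + 2) / (1 - w ^ (j + 2))) = (1 - w ^ j) / (1 - w ^ (j + 2)) - 1"
  using assms by (simp add: field_simps power_add power2_eq_square)

lemma motzkin_v_neq_0: "motzkin_v \<noteq> 0"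
  using motzkin_v_eq by (metis add.right_neutral fps_X_neq_zero mult_1_right mult_zero_left
      power_zero_numeral zero_neq_numeral)

lemma fls_strip_series_Suc_minus:
  fixes m :: nat
  defines "w \<equiv> fps_to_fls motzkin_v"
  shows "fps_to_fls (strip_series (Suc m)) - fps_to_fls (strip_series m) =
    (1 + w + w^2) * (1 - 1 / w^2) * (w ^ (m + 3) / (1 - w ^ (m + 3)) - w ^ (m + 2) / (1 - w ^ (m + 2)))"
proof -
  have "w \<noteq> 0" unfolding w_def using motzkin_v_neq_0 by simp
  have one_minus_w_power: "1 - w ^ k \<noteq> 0" if "0 < k" for k
  proof -
    have "1 - motzkin_v ^ k \<noteq> 0"
      using one_minus_motzkin_v_power_nth_0[OF that] by (metis fps_zero_nth zero_neq_one)
    then show ?thesis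
      unfolding w_def fps_to_fls_power[symmetric] by (metis fps_one_to_fls fps_to_fls_minus fps_to_fls_eq_0_iff)
  qed
  have ratio: "(1 - 1 / w^2) * (w ^ (j + 2) / (1 - w ^ (j + 2))) = (1 - w ^ j) / (1 - w ^ (j + 2)) - 1" for j
    using \<open>w \<noteq> 0\<close> one_minus_w_power[of "j + 2"] by (intro one_minus_inverse_square_ratio) auto
  define Q where "Q = 1 + w + w^2"
  have series: "fps_to_fls (strip_series k) = Q * (1 - w ^ k) / (1 - w ^ (k + 2))" for k
    unfolding Q_def w_def by (rule fls_strip_series)
  have distrib: "Q * a * (b - c) = Q * (a * b) - Q * (a * c)" for a b c :: "real fls"
    by (simp add: algebra_simps)
  have "Q * (1 - 1 / w^2) * (w ^ (m + 1 + 2) / (1 - w ^ (m + 1 + 2)) - w ^ (m + 2) / (1 - w ^ (m + 2)))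
      = Q * ((1 - 1 / w^2) * (w ^ (m + 1 + 2) / (1 - w ^ (m + 1 + 2))))
        - Q * ((1 - 1 / w^2) * (w ^ (m + 2) / (1 - w ^ (m + 2))))"
    by (rule distrib)
  also have "\<dots> = Q * (1 - w ^ (m + 1)) / (1 - w ^ (m + 1 + 2)) - Q * (1 - w ^ m) / (1 - w ^ (m + 2))"
    unfolding ratio by (simp add: right_diff_distrib)
  finally show ?thesis
    by (simp add: series Q_def numeral_3_eq_3)
qed

theorem mainTheorem2:
  fixes h :: nat
  defines "w \<equiv> fps_to_fls motzkin_v"
  shows "fps_to_fls (Horiz h) =
           (1 + w + w^2) * (1 - 1 / w^2) *
           (w^(2*h+4) / (1 - w^(2*h+4)) - w^(2*h+3) / (1 - w^(2*h+3)))
     \<and> fps_to_fls (NoHoriz h) =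
           (1 + w + w^2) * (1 - 1 / w^2) *
           (w^(2*h+3) / (1 - w^(2*h+3)) - w^(2*h+2) / (1 - w^(2*h+2)))"
proof
  show "fps_to_fls (Horiz h) = (1 + w + w^2) * (1 - 1 / w^2) *
           (w^(2*h+4) / (1 - w^(2*h+4)) - w^(2*h+3) / (1 - w^(2*h+3)))"
    using fls_strip_series_Suc_minus[of "2 * h + 1"]
    by (simp add: Horiz_eq_strip_series w_def numeral_eq_Suc)
  show "fps_to_fls (NoHoriz h) = (1 + w + w^2) * (1 - 1 / w^2) *
           (w^(2*h+3) / (1 - w^(2*h+3)) - w^(2*h+2) / (1 - w^(2*h+2)))"
    using fls_strip_series_Suc_minus[of "2 * h"]
    by (simp add: NoHoriz_eq_strip_series w_def numeral_eq_Suc)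
qed

end
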